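(* Let $P$ be a convex polygon with no two edges parallel. For any LMAP $Q$ in $P$, at least one of the following holds: (a) $Q$ has an anchored narrow corner; (b) $Q$ has an anchored broad corner that has at least one adjacent corner anchored; (c) all four corners of $Q$ are even.
   Context: $P$ is a compact convex polygon with boundary $\partial P$, edges $e_1,\ldots,e_n$ clockwise and vertices $v_1,\ldots,v_n$, $e_i$ the open segment from $v_i$ to $v_{i+1}$ (indices mod $n$). $\ell_i$ is the line containing $e_i$, $\mathsf{I}_{i,j}=\ell_i\cap\ell_j$. For distinct edges, $e_i\prec e_j$ means $\mathsf{I}_{i,j}=v_i+t(v_{i+1}-v_i)$ for some $t\ge1$ (equivalently the clockwise turning angle from direction $v_{i+1}-v_i$ to $v_{j+1}-v_j$ is in $(0,\pi)$). A unit is an edge or a vertex of $P$; for $X\in\partial P$, $\mathbf{u}(X)$ is the unique unit containing $X$. For a vertex $v_i$, $back(v_i)=e_{i-1}$, $forw(v_i)=e_i$; for an edge $e$, $back(e)=forw(e)=e$. A unit $u$ is chasing a unit $u'$ if $back(u)\prec back(u')$ and $forw(u)\prec forw(u')$. For a parallelogram $A_0A_1A_2A_3$ inscribed in $P$ (corners on $\partial P$, in clockwise order, subscripts mod 4), corner $A_i$ is narrow if $\mathbf{u}(A_{i-1})$ is chasing $\mathbf{u}(A_{i+1})$; broad if $\mathbf{u}(A_{i+1})$ is chasing $\mathbf{u}(A_{i-1})$; even if neither of $\mathbf{u}(A_{i+1}),\mathbf{u}(A_{i-1})$ is chasing the other. A corner is anchored if it coincides with a vertex of $P$. A parallelogram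 lies in $P$ if its corners lie in $P$; $A_0A_1A_2A_3$ lying in $P$ is locally maximal if there is $\delta>0$ such that every parallelogram $B_0B_1B_2B_3$ lying in $P$ with $|A_iB_i|<\delta$ for all $i$ has area at most that of $A_0A_1A_2A_3$; it is slidable if two corners lie in the same open edge. An LMAP is a locally maximal non-slidable parallelogram lying in $P$ (every LMAP is inscribed). *)

theory Defs
  imports "HOL-Analysis.Analysis"
begin

type_synonym point = "real \<times> real"

text \<open>2D cross product; positive iff the turn from a to b is counterclockwise.\<close>
definition cross :: "point \<Rightarrow> point \<Rightarrow> real" where
  "cross a b = fst a * snd b - snd a * fst b"

text \<open>A polygon is given by n vertices v 0, ..., v (n-1) (indices taken mod n).\<close>
definition convex_polygon_cw :: "(nat \<Rightarrow> point) \<Rightarrow> nat \<Rightarrow> bool" where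
  "convex_polygon_cw v n \<longleftrightarrow> n \<ge> 3 \<and>
     (\<forall>i<n. \<forall>j<n. j \<noteq> i \<and> j \<noteq> Suc i mod n \<longrightarrow>
        cross (v (Suc i mod n) - v i) (v j - v i) < 0)"

definition polygon :: "(nat \<Rightarrow> point) \<Rightarrow> nat \<Rightarrow> point set" where
  "polygon v n = convex hull (v ` {..<n})"

definition edge_dir :: "(nat \<Rightarrow> point) \<Rightarrow> nat \<Rightarrow> nat \<Rightarrow> point" where
  "edge_dir v n i = v (Suc i mod n) - v i"

definition edge :: "(nat \<Rightarrow> point) \<Rightarrow> nat \<Rightarrow> nat \<Rightarrow> point set" where
  "edge v n i = open_segment (v i) (v (Suc i mod n))"

definition edge_line :: "(nat \<Rightarrow> point) \<Rightarrow> nat \<Rightarrow> nat \<Rightarrow> point set" where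
  "edge_line v n i = {v i + s *\<^sub>R edge_dir v n i | s. True}"

definition no_parallel_edges :: "(nat \<Rightarrow> point) \<Rightarrow> nat \<Rightarrow> bool" where
  "no_parallel_edges v n \<longleftrightarrow>
     (\<forall>i<n. \<forall>j<n. i \<noteq> j \<longrightarrow> cross (edge_dir v n i) (edge_dir v n j) \<noteq> 0)"

definition prec :: "(nat \<Rightarrow> point) \<Rightarrow> nat \<Rightarrow> nat \<Rightarrow> nat \<Rightarrow> bool" where
  "prec v n i j \<longleftrightarrow> i \<noteq> j \<and>
     (\<exists>t\<ge>1. edge_line v n i \<inter> edge_line v n j = {v i + t *\<^sub>R edge_dir v n i})"

datatype punit = Vert nat | Edge nat

definition unit_of :: "(nat \<Rightarrow> point) \<Rightarrow> nat \<Rightarrow> point \<Rightarrow> punit \<Rightarrow> bool" where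
  "unit_of v n X u \<longleftrightarrow>
     (\<exists>i<n. (u = Vert i \<and> X = v i) \<or> (u = Edge i \<and> X \<in> edge v n i))"

fun back_e :: "nat \<Rightarrow> punit \<Rightarrow> nat" where
  "back_e n (Vert i) = (i + n - 1) mod n"
| "back_e n (Edge i) = i"

fun forw_e :: "nat \<Rightarrow> punit \<Rightarrow> nat" where
  "forw_e n (Vert i) = i"
| "forw_e n (Edge i) = i"

definition chasing :: "(nat \<Rightarrow> point) \<Rightarrow> nat \<Rightarrow> punit \<Rightarrow> punit \<Rightarrow> bool" where
  "chasing v n u u' \<longleftrightarrow> prec v n (back_e n u) (back_e n u') \<and> prec v n (forw_e n u) (forw_e n u')"

text \<open>Parallelograms A 0 A 1 A 2 A 3 (corner indices mod 4), non-degenerate, in clockwise order.\<close>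
definition parallelogram :: "(nat \<Rightarrow> point) \<Rightarrow> bool" where
  "parallelogram A \<longleftrightarrow> A 0 + A 2 = A 1 + A 3 \<and> cross (A 1 - A 0) (A 3 - A 0) < 0"

definition par_area :: "(nat \<Rightarrow> point) \<Rightarrow> real" where
  "par_area A = \<bar>cross (A 1 - A 0) (A 3 - A 0)\<bar>"

definition lies_in :: "(nat \<Rightarrow> point) \<Rightarrow> point set \<Rightarrow> bool" where
  "lies_in A S \<longleftrightarrow> (\<forall>i<4. A i \<in> S)"

definition locally_maximal :: "(nat \<Rightarrow> point) \<Rightarrow> nat \<Rightarrow> (nat \<Rightarrow> point) \<Rightarrow> bool" where
  "locally_maximal v n A \<longleftrightarrow> parallelogram A \<and> lies_in A (polygon v n) \<and>
     (\<exists>\<delta>>0. \<forall>B. parallelogram B \<and> lies_in B (polygon v n) \<and> (\<forall>i<4. dist (A i) (B i) < \<delta>)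
        \<longrightarrow> par_area B \<le> par_area A)"

definition slidable :: "(nat \<Rightarrow> point) \<Rightarrow> nat \<Rightarrow> (nat \<Rightarrow> point) \<Rightarrow> bool" where
  "slidable v n A \<longleftrightarrow> (\<exists>i<4. \<exists>j<4. \<exists>k<n. i \<noteq> j \<and> A i \<in> edge v n k \<and> A j \<in> edge v n k)"

definition LMAP :: "(nat \<Rightarrow> point) \<Rightarrow> nat \<Rightarrow> (nat \<Rightarrow> point) \<Rightarrow> bool" where
  "LMAP v n A \<longleftrightarrow> locally_maximal v n A \<and> \<not> slidable v n A"

definition anchored :: "(nat \<Rightarrow> point) \<Rightarrow> nat \<Rightarrow> (nat \<Rightarrow> point) \<Rightarrow> nat \<Rightarrow> bool" where
  "anchored v n A i \<longleftrightarrow> (\<exists>k<n. A (i mod 4) = v k)"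

definition narrow :: "(nat \<Rightarrow> point) \<Rightarrow> nat \<Rightarrow> (nat \<Rightarrow> point) \<Rightarrow> nat \<Rightarrow> bool" where
  "narrow v n A i \<longleftrightarrow> (\<exists>u u'. unit_of v n (A ((i + 3) mod 4)) u \<and>
      unit_of v n (A ((i + 1) mod 4)) u' \<and> chasing v n u u')"

definition broad :: "(nat \<Rightarrow> point) \<Rightarrow> nat \<Rightarrow> (nat \<Rightarrow> point) \<Rightarrow> nat \<Rightarrow> bool" where
  "broad v n A i \<longleftrightarrow> (\<exists>u u'. unit_of v n (A ((i + 3) mod 4)) u \<and>
      unit_of v n (A ((i + 1) mod 4)) u' \<and> chasing v n u' u)"

definition even_corner :: "(nat \<Rightarrow> point) \<Rightarrow> nat \<Rightarrow> (nat \<Rightarrow> point) \<Rightarrow> nat \<Rightarrow> bool" where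
  "even_corner v n A i \<longleftrightarrow> (\<exists>u u'. unit_of v n (A ((i + 3) mod 4)) u \<and>
      unit_of v n (A ((i + 1) mod 4)) u' \<and> \<not> chasing v n u u' \<and> \<not> chasing v n u' u)"

end

theory Submission
  imports Defs
begin

text \<open>Every corner of an LMAP lies on the boundary of the polygon: otherwise translating it
  together with a neighbour into the polygon would enlarge the area. A corner that is not even is
  narrow or broad, and a broad corner is narrow when seen from the opposite corner, so some corner
  is narrow. A narrow corner cannot lie in an open edge together with both of its neighbours:
  sliding these three corners along their edges, with speeds that keep the fourth corner fixed, the
  first order change of the area can be made nonnegative by choosing the direction, and the second
  order change is positive because the edge at the previous corner is chasing the edge at the next
  one. Two opposite corners in open edges lie in different, hence non-parallel, edges, so one of
  these edges chases the other and one of the two remaining corners is narrow.\<close>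

section \<open>Cross products\<close>

lemma cross_inner: "cross d x = inner (- snd d, fst d) x"
  by (cases d; cases x) (simp add: cross_def)

lemma cross_self [simp]: "cross a a = 0"
  by (simp add: cross_def)

lemma cross_swap: "cross a b = - cross b a"
  by (simp add: cross_def)

lemma cross_add_right: "cross a (b + c) = cross a b + cross a c"
  and cross_diff_right: "cross a (b - c) = cross a b - cross a c"
  and cross_scaleR_right: "cross a (t *\<^sub>R b) = t * cross a b"
  by (simp_all add: cross_def algebra_simps)

lemma cross_mult_cross: "cross a b * cross u w = cross a u * cross b w - cross a w * cross b u"
  by (simp add: cross_def algebra_simps)

lemma cross_nonneg_if_products:
  assumes "cross u w < 0" "cross a u * cross b w \<le> 0" "0 \<le> cross a w * cross b u"
  shows "0 \<le> cross a b"
proof -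
  have "cross a b * cross u w \<le> 0"
    using assms(2,3) cross_mult_cross[of a b u w] by linarith
  then show ?thesis
    using assms(1) by (simp add: mult_le_0_iff)
qed

lemma scaleR_cross_decompose: "cross p q *\<^sub>R r = cross r q *\<^sub>R p + cross p r *\<^sub>R q"
  by (cases p; cases q; cases r) (simp add: cross_def algebra_simps)

lemma cross_eq_0_imp_multiple:
  assumes "cross d x = 0" "d \<noteq> 0"
  shows "\<exists>t. x = t *\<^sub>R d"
proof (cases "fst d = 0")
  case True
  with assms have "x = (snd x / snd d) *\<^sub>R d"
    by (cases x; cases d) (auto simp: cross_def field_simps zero_prod_def)
  then show ?thesis by blast
next
  case False
  with assms have "x = (fst x / fst d) *\<^sub>R d"
    by (cases x; cases d) (auto simp: cross_def field_simps)
  then show ?thesis by blast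
qed

lemma inner_mult_cross:
  "inner a x * cross e f = cross e x * inner a f - cross f x * inner a e"
  by (cases a; cases x; cases e; cases f) (simp add: cross_def algebra_simps)

lemma inner_nonneg_in_cone:
  assumes "cross e f < 0" "cross e y \<le> 0" "cross f y \<le> 0" "inner a e \<le> 0" "0 \<le> inner a f"
  shows "0 \<le> inner a y"
proof -
  have "cross e y * inner a f \<le> 0" "0 \<le> cross f y * inner a e"
    using assms(2-5) by (simp_all add: mult_nonpos_nonneg mult_nonpos_nonpos)
  then have "inner a y * cross e f \<le> 0"
    using inner_mult_cross[of a y e f] by linarith
  with assms(1) show ?thesis
    by (simp add: mult_le_0_iff)
qed

lemma convex_cross_halfplane: "convex {x. cross d (x - p) \<le> 0}"
proof -
  have "{x. cross d (x - p) \<le> 0} = {x. inner (- snd d, fst d) x \<le> cross d p}"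
    by (auto simp: cross_diff_right cross_inner[symmetric])
  then show ?thesis by (simp add: convex_halfspace_le)
qed

lemma inter_lines_singleton:
  assumes "cross e d \<noteq> 0"
  shows "{a + s *\<^sub>R d | s. True} \<inter> {b + s *\<^sub>R e | s. True}
       = {a + (- cross e (a - b) / cross e d) *\<^sub>R d}"
proof (intro equalityI subsetI)
  fix x assume "x \<in> {a + s *\<^sub>R d | s. True} \<inter> {b + s *\<^sub>R e | s. True}"
  then obtain s s' where x: "x = a + s *\<^sub>R d" "x = b + s' *\<^sub>R e" by blast
  then have "cross e ((a - b) + s *\<^sub>R d) = cross e (s' *\<^sub>R e)"
    by (metis add_diff_cancel_left' add_diff_eq diff_add_eq)
  then have "cross e (a - b) + s * cross e d = 0"
    by (simp add: cross_add_right cross_scaleR_right)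
  then have "s = - cross e (a - b) / cross e d"
    using assms by (simp add: field_simps)
  then show "x \<in> {a + (- cross e (a - b) / cross e d) *\<^sub>R d}"
    using x by simp
next
  fix x assume "x \<in> {a + (- cross e (a - b) / cross e d) *\<^sub>R d}"
  then have x: "x = a + (- cross e (a - b) / cross e d) *\<^sub>R d" by simp
  have "e \<noteq> 0" using assms by (auto simp: cross_def)
  moreover have "cross e (x - b) = 0"
    using assms by (simp add: x cross_add_right cross_diff_right cross_scaleR_right field_simps)
  ultimately obtain s where "x - b = s *\<^sub>R e"
    using cross_eq_0_imp_multiple by blast
  then have "x = b + s *\<^sub>R e"
    by (simp add: algebra_simps)
  with x show "x \<in> {a + s *\<^sub>R d | s. True} \<inter> {b + s *\<^sub>R e | s. True}"
    by blast
qed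

section \<open>Convex polygons\<close>

lemma polygon_vertex: "k < n \<Longrightarrow> v k \<in> polygon v n"
  by (auto simp: polygon_def intro: hull_inc)

lemma convex_polygon: "convex (polygon v n)"
  by (simp add: polygon_def convex_convex_hull)

lemma vertex_right_of_edge:
  assumes "convex_polygon_cw v n" "k < n" "j < n"
  shows "cross (edge_dir v n k) (v j - v k) \<le> 0"
proof (cases "j = k \<or> j = Suc k mod n")
  case True
  then show ?thesis by (auto simp: edge_dir_def cross_def)
next
  case False
  with assms show ?thesis
    unfolding convex_polygon_cw_def edge_dir_def by force
qed

lemma polygon_right_of_edge:
  assumes "convex_polygon_cw v n" "k < n" "x \<in> polygon v n"
  shows "cross (edge_dir v n k) (x - v k) \<le> 0"
proof -
  have "polygon v n \<subseteq> {x. cross (edge_dir v n k) (x - v k) \<le> 0}"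
    unfolding polygon_def
    by (rule hull_minimal) (auto intro: vertex_right_of_edge[OF assms(1,2)] convex_cross_halfplane)
  with assms(3) show ?thesis by blast
qed

lemma edge_dir_turn:
  assumes "convex_polygon_cw v n" "k < n"
  shows "cross (edge_dir v n k) (edge_dir v n (Suc k mod n)) < 0"
proof -
  define j where "j = Suc (Suc k) mod n"
  have "3 \<le> n" using assms(1) by (simp add: convex_polygon_cw_def)
  with assms(2) have "j < n" "j \<noteq> k" "j \<noteq> Suc k mod n"
    unfolding j_def by (auto simp: mod_Suc)
  with assms have "cross (edge_dir v n k) (v j - v k) < 0"
    unfolding convex_polygon_cw_def edge_dir_def by blast
  moreover have "edge_dir v n (Suc k mod n) = (v j - v k) - edge_dir v n k"
    by (simp add: edge_dir_def j_def mod_Suc_eq)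
  ultimately show ?thesis
    by (simp add: cross_diff_right)
qed

lemma edge_dir_nonzero:
  assumes "convex_polygon_cw v n" "k < n"
  shows "edge_dir v n k \<noteq> 0"
  using edge_dir_turn[OF assms] by (auto simp: cross_def)

lemma prev_index:
  assumes "k < (n::nat)"
  shows "(k + n - 1) mod n < n" "Suc ((k + n - 1) mod n) mod n = k"
proof -
  show "(k + n - 1) mod n < n" using assms by simp
  show "Suc ((k + n - 1) mod n) mod n = k"
  proof (cases k)
    case 0
    with assms show ?thesis by (simp add: mod_Suc)
  next
    case (Suc k')
    with assms show ?thesis by simp
  qed
qed

lemma right_of_all_edges_imp_polygon:
  assumes cv: "convex_polygon_cw v n"
    and right: "\<And>k. k < n \<Longrightarrow> cross (edge_dir v n k) (x - v k) \<le> 0"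
  shows "x \<in> polygon v n"
proof (rule ccontr)
  assume "x \<notin> polygon v n"
  moreover have "closed (polygon v n)"
    by (simp add: polygon_def compact_imp_closed finite_imp_compact_convex_hull)
  ultimately obtain a b where ab: "inner a x < b" "\<forall>y\<in>polygon v n. b < inner a y"
    using separating_hyperplane_closed_point[OF convex_polygon] by blast
  have "0 < n" using cv by (simp add: convex_polygon_cw_def)
  then have "{..<n} \<noteq> {}" by auto
  then obtain m where "is_arg_min (\<lambda>k. inner a (v k)) (\<lambda>k. k \<in> {..<n}) m"
    using ex_is_arg_min_if_finite by blast
  then have m: "m < n" "\<And>k. k < n \<Longrightarrow> inner a (v m) \<le> inner a (v k)"
    unfolding is_arg_min_def by (auto simp: not_less, meson not_le)
  define p where "p = (m + n - 1) mod n"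
  have p: "p < n" "Suc p mod n = m"
    using prev_index[OF m(1)] by (simp_all add: p_def)
  define e where "e = edge_dir v n p"
  define f where "f = edge_dir v n m"
  have e: "e = v m - v p" by (simp add: e_def edge_dir_def p(2))
  have "x - v p = (x - v m) + e" by (simp add: e)
  then have "cross e (x - v p) = cross e (x - v m) + cross e e"
    by (simp only: cross_add_right)
  then have "cross e (x - v m) \<le> 0"
    using right[OF p(1)] by (simp add: e_def)
  moreover have "cross f (x - v m) \<le> 0"
    using right[OF m(1)] by (simp add: f_def)
  moreover have "cross e f < 0"
    using edge_dir_turn[OF cv p(1)] by (simp add: e_def f_def p(2))
  moreover have "inner a e \<le> 0"
    using m(2)[OF p(1)] by (simp add: e inner_diff_right)
  moreover have "0 \<le> inner a f"
    using m(2)[of "Suc m mod n"] m(1) by (simp add: f_def edge_dir_def inner_diff_right)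
  ultimately have "0 \<le> inner a (x - v m)"
    using inner_nonneg_in_cone by blast
  moreover have "b < inner a (v m)"
    using ab(2) polygon_vertex[OF m(1)] by blast
  ultimately show False
    using ab(1) by (simp add: inner_diff_right)
qed

lemma prec_iff_cross:
  assumes cv: "convex_polygon_cw v n" and np: "no_parallel_edges v n"
    and ij: "i < n" "j < n" "i \<noteq> j"
  shows "prec v n i j \<longleftrightarrow> cross (edge_dir v n i) (edge_dir v n j) < 0"
proof -
  define d where "d = edge_dir v n i"
  define e where "e = edge_dir v n j"
  define c where "c = cross e d"
  define g where "g = cross e (v i - v j)"
  define t where "t = - g / c"
  have c: "c \<noteq> 0"
    using np ij by (simp add: no_parallel_edges_def c_def d_def e_def)
  have "edge_line v n i \<inter> edge_line v n j = {v i + t *\<^sub>R d}"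
    using inter_lines_singleton[OF c[unfolded c_def]]
    by (simp add: edge_line_def t_def g_def c_def d_def e_def)
  moreover have "d \<noteq> 0"
    using edge_dir_nonzero[OF cv ij(1)] by (simp add: d_def)
  ultimately have "prec v n i j \<longleftrightarrow> 1 \<le> t"
    using ij(3) by (auto simp: prec_def d_def)
  moreover have "1 \<le> t \<longleftrightarrow> 0 < c"
  proof -
    have "g \<le> 0"
      using vertex_right_of_edge[OF cv ij(2,1)] by (simp add: g_def e_def)
    moreover have "v (Suc i mod n) - v j = (v i - v j) + d"
      by (simp add: d_def edge_dir_def)
    then have "g + c \<le> 0"
      using vertex_right_of_edge[OF cv ij(2), of "Suc i mod n"] ij(1)
      by (simp add: g_def c_def e_def cross_add_right[symmetric] diff_add_eq)
    ultimately show ?thesis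
    proof (cases "0 < c")
      case False
      with c have "c < 0" by simp
      with \<open>g \<le> 0\<close> have "t \<le> 0"
        by (simp add: t_def divide_nonpos_neg)
      with False show ?thesis by simp
    qed (simp add: t_def field_simps)
  qed
  ultimately show ?thesis
    by (simp add: c_def d_def e_def cross_swap[of "edge_dir v n i"])
qed

lemma prec_total:
  assumes "convex_polygon_cw v n" "no_parallel_edges v n" "i < n" "j < n" "i \<noteq> j"
  shows "prec v n i j \<or> prec v n j i"
proof -
  have "cross (edge_dir v n i) (edge_dir v n j) \<noteq> 0"
    using assms(2-5) by (simp add: no_parallel_edges_def)
  then show ?thesis
    using prec_iff_cross[OF assms] prec_iff_cross[OF assms(1,2,4,3)] assms(5)
    by (auto simp: cross_swap[of "edge_dir v n j"])
qed

lemma chasing_Edge_Edge [simp]: "chasing v n (Edge a) (Edge b) \<longleftrightarrow> prec v n a b"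
  by (simp add: chasing_def)

lemma unit_of_Vert [simp]: "unit_of v n x (Vert k) \<longleftrightarrow> k < n \<and> x = v k"
  and unit_of_Edge [simp]: "unit_of v n x (Edge k) \<longleftrightarrow> k < n \<and> x \<in> edge v n k"
  by (auto simp: unit_of_def)

lemma edge_subset_polygon:
  assumes "k < n"
  shows "edge v n k \<subseteq> polygon v n"
proof -
  have "closed_segment (v k) (v (Suc k mod n)) \<subseteq> polygon v n"
    using assms unfolding polygon_def
    by (intro closed_segment_subset_convex_hull) (auto intro: hull_inc)
  then show ?thesis
    unfolding edge_def using open_closed_segment by blast
qed

lemma edge_point_on_edge_line:
  assumes "x \<in> edge v n k"
  obtains t where "0 < t" "t < 1" "x = v k + t *\<^sub>R edge_dir v n k"
proof -
  obtain t where "0 < t" "t < 1" "x = (1 - t) *\<^sub>R v k + t *\<^sub>R v (Suc k mod n)"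
    using assms unfolding edge_def in_segment by blast
  then show ?thesis
    using that by (simp add: edge_dir_def algebra_simps)
qed

lemma polygon_right_of_edge_point:
  assumes "convex_polygon_cw v n" "k < n" "a \<in> edge v n k" "x \<in> polygon v n"
  shows "cross (edge_dir v n k) (x - a) \<le> 0"
proof -
  obtain t where "a = v k + t *\<^sub>R edge_dir v n k"
    using edge_point_on_edge_line[OF assms(3)] by blast
  then have "cross (edge_dir v n k) (x - a) = cross (edge_dir v n k) (x - v k)"
    by (simp add: cross_diff_right cross_add_right cross_scaleR_right diff_add_eq_diff_diff_swap)
  with polygon_right_of_edge[OF assms(1,2,4)] show ?thesis by simp
qed

lemma eventually_edge_slide:
  assumes "x \<in> edge v n k" "(f \<longlongrightarrow> 0) F"
  shows "\<forall>\<^sub>F e in F. x + f e *\<^sub>R edge_dir v n k \<in> edge v n k"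
proof -
  obtain s where s: "0 < s" "s < 1" "x = (1 - s) *\<^sub>R v k + s *\<^sub>R v (Suc k mod n)"
    and ne: "v k \<noteq> v (Suc k mod n)"
    using assms unfolding edge_def in_segment by blast
  have "x + t *\<^sub>R edge_dir v n k \<in> edge v n k" if "\<bar>t\<bar> < min s (1 - s)" for t
  proof -
    have "x + t *\<^sub>R edge_dir v n k = (1 - (s + t)) *\<^sub>R v k + (s + t) *\<^sub>R v (Suc k mod n)"
      using s(3) by (simp add: edge_dir_def algebra_simps)
    moreover have "0 < s + t" "s + t < 1" using that by auto
    ultimately show ?thesis
      unfolding edge_def in_segment using ne by blast
  qed
  moreover have "0 < min s (1 - s)" using s by simp
  ultimately have "\<forall>\<^sub>F t in nhds 0. x + t *\<^sub>R edge_dir v n k \<in> edge v n k"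
    unfolding eventually_nhds_metric dist_real_def by (metis diff_zero)
  from eventually_compose_filterlim[OF this assms(2)] show ?thesis .
qed

lemma polygon_on_edge_line_param:
  assumes cv: "convex_polygon_cw v n" and k: "k < n" and x: "x \<in> polygon v n"
    and t: "x - v k = t *\<^sub>R edge_dir v n k"
  shows "0 \<le> t \<and> t \<le> 1"
proof
  define d where "d = edge_dir v n k"
  define k' where "k' = Suc k mod n"
  have k': "k' < n" using k by (simp add: k'_def)
  have "x - v k' = (t - 1) *\<^sub>R d"
    using t by (simp add: k'_def d_def edge_dir_def algebra_simps)
  then have "(t - 1) * cross (edge_dir v n k') d \<le> 0"
    using polygon_right_of_edge[OF cv k' x] by (simp add: cross_scaleR_right)
  moreover have "0 < cross (edge_dir v n k') d"
    using edge_dir_turn[OF cv k] cross_swap[of d] by (simp add: k'_def d_def)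
  ultimately show "t \<le> 1" by (simp add: mult_le_0_iff)
  define p where "p = (k + n - 1) mod n"
  have p: "p < n" "Suc p mod n = k"
    using prev_index[OF k] by (simp_all add: p_def)
  have "x - v p = edge_dir v n p + t *\<^sub>R d"
    using t by (simp add: edge_dir_def d_def p(2) algebra_simps)
  then have "t * cross (edge_dir v n p) d \<le> 0"
    using polygon_right_of_edge[OF cv p(1) x] by (simp add: cross_add_right cross_scaleR_right)
  moreover have "cross (edge_dir v n p) d < 0"
    using edge_dir_turn[OF cv p(1)] by (simp add: p(2) d_def)
  ultimately show "0 \<le> t" by (simp add: mult_le_0_iff)
qed

lemma on_edge_line_has_unit:
  assumes cv: "convex_polygon_cw v n" and k: "k < n" and x: "x \<in> polygon v n"
    and "cross (edge_dir v n k) (x - v k) = 0"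
  shows "\<exists>u. unit_of v n x u"
proof -
  obtain t where t: "x - v k = t *\<^sub>R edge_dir v n k"
    using cross_eq_0_imp_multiple[OF assms(4) edge_dir_nonzero[OF cv k]] by blast
  then have x_eq: "x = (1 - t) *\<^sub>R v k + t *\<^sub>R v (Suc k mod n)"
    by (simp add: edge_dir_def algebra_simps)
  consider "t = 0" | "t = 1" | "0 < t" "t < 1"
    using polygon_on_edge_line_param[OF cv k x t] by linarith
  then show ?thesis
  proof cases
    case 1
    then have "unit_of v n x (Vert k)" using x_eq k by simp
    then show ?thesis ..
  next
    case 2
    then have "unit_of v n x (Vert (Suc k mod n))" using x_eq k by simp
    then show ?thesis ..
  next
    case 3
    moreover have "v k \<noteq> v (Suc k mod n)"
      using edge_dir_nonzero[OF cv k] by (simp add: edge_dir_def)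
    ultimately have "unit_of v n x (Edge k)"
      using x_eq k unfolding unit_of_Edge edge_def in_segment by blast
    then show ?thesis ..
  qed
qed

lemma no_unit_imp_interior:
  assumes cv: "convex_polygon_cw v n" and x: "x \<in> polygon v n"
    and no_unit: "\<nexists>u. unit_of v n x u"
  shows "x \<in> interior (polygon v n)"
proof -
  define S where "S = (\<Inter>k\<in>{..<n}. {y. cross (edge_dir v n k) (y - v k) < 0})"
  have "open S"
    unfolding S_def cross_def by (intro open_INT finite_lessThan ballI open_Collect_less continuous_intros)
  moreover have "S \<subseteq> polygon v n"
    using right_of_all_edges_imp_polygon[OF cv] by (force simp: S_def)
  moreover have "x \<in> S"
    using polygon_right_of_edge[OF cv _ x] on_edge_line_has_unit[OF cv _ x] no_unit
    by (force simp: S_def order.order_iff_strict)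
  ultimately show ?thesis
    by (meson interior_maximal subsetD)
qed

section \<open>Locally maximal parallelograms\<close>

lemma lies_in_iff: "lies_in B S \<longleftrightarrow> B 0 \<in> S \<and> B 1 \<in> S \<and> B 2 \<in> S \<and> B 3 \<in> S"
proof -
  have "{..<4::nat} = {0, 1, 2, 3}" by auto
  then show ?thesis by (auto simp: lies_in_def simp flip: lessThan_iff)
qed

lemma locally_maximal_no_enlarging_motion:
  assumes LM: "locally_maximal v n A" and "m 0 + m 2 = m 1 + m 3"
    and inside: "\<forall>\<^sub>F e in at_right 0. lies_in (\<lambda>i. A i + e *\<^sub>R m i) (polygon v n)"
    and larger: "\<forall>\<^sub>F e in at_right 0. cross (A 1 - A 0 + e *\<^sub>R (m 1 - m 0)) (A 3 - A 0 + e *\<^sub>R (m 3 - m 0))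
                                   < cross (A 1 - A 0) (A 3 - A 0)"
  shows False
proof -
  obtain \<delta> where "\<delta> > 0" and "parallelogram A" and max: "\<And>B. parallelogram B
      \<Longrightarrow> lies_in B (polygon v n) \<Longrightarrow> \<forall>i<4. dist (A i) (B i) < \<delta> \<Longrightarrow> par_area B \<le> par_area A"
    using LM unfolding locally_maximal_def by blast
  have "((\<lambda>e. A i + e *\<^sub>R m i) \<longlongrightarrow> A i) (at_right 0)" for i
    by (auto intro!: tendsto_eq_intros)
  then have "\<forall>\<^sub>F e in at_right 0. \<forall>i\<in>{..<4}. dist (A i + e *\<^sub>R m i) (A i) < \<delta>"
    using \<open>\<delta> > 0\<close> by (intro eventually_ball_finite ballI tendstoD) auto
  then obtain e where e: "lies_in (\<lambda>i. A i + e *\<^sub>R m i) (polygon v n)"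
      "\<forall>i<4. dist (A i) (A i + e *\<^sub>R m i) < \<delta>"
      "cross (A 1 - A 0 + e *\<^sub>R (m 1 - m 0)) (A 3 - A 0 + e *\<^sub>R (m 3 - m 0))
        < cross (A 1 - A 0) (A 3 - A 0)"
    using eventually_happens'[OF trivial_limit_at_right_real
        eventually_conj[OF _ eventually_conj[OF inside larger]]]
    by (fastforce simp: dist_commute)
  let ?B = "\<lambda>i. A i + e *\<^sub>R m i"
  have "?B 1 - ?B 0 = A 1 - A 0 + e *\<^sub>R (m 1 - m 0)" "?B 3 - ?B 0 = A 3 - A 0 + e *\<^sub>R (m 3 - m 0)"
    by (simp_all add: algebra_simps)
  with e(3) have larger_e: "cross (?B 1 - ?B 0) (?B 3 - ?B 0) < cross (A 1 - A 0) (A 3 - A 0)"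
    by (simp only:)
  have neg: "cross (A 1 - A 0) (A 3 - A 0) < 0"
    using \<open>parallelogram A\<close> by (simp add: parallelogram_def)
  have "?B 0 + ?B 2 = ?B 1 + ?B 3"
    using \<open>parallelogram A\<close> \<open>m 0 + m 2 = m 1 + m 3\<close>
    by (simp add: parallelogram_def algebra_simps flip: scaleR_add_right)
  then have "parallelogram ?B"
    using less_trans[OF larger_e neg] unfolding parallelogram_def by (rule conjI)
  moreover have "par_area A < par_area ?B"
    unfolding par_area_def abs_of_neg[OF neg] abs_of_neg[OF less_trans[OF larger_e neg]]
    using larger_e by linarith
  ultimately show False
    using max e(1,2) by fastforce
qed

definition rotate_corners :: "nat \<Rightarrow> (nat \<Rightarrow> point) \<Rightarrow> nat \<Rightarrow> point" where
  "rotate_corners k A j = A ((j + k) mod 4)"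

lemma rotate_corners_rotate_corners:
  "rotate_corners k (rotate_corners l A) = rotate_corners (k + l) A"
  by (auto simp: rotate_corners_def mod_add_left_eq add.assoc)

lemma mod4_rotate_back:
  assumes "(i::nat) < 4" "a + b = 4 * k"
  shows "((i + a) mod 4 + b) mod 4 = i"
proof -
  have "((i + a) mod 4 + b) mod 4 = (i + k * 4) mod 4"
    using assms(2) by (simp add: mod_add_left_eq add.assoc)
  with assms(1) show ?thesis by simp
qed

lemma rotate_corners_back: "i < 4 \<Longrightarrow> rotate_corners k A ((i + 3 * k) mod 4) = A i"
  unfolding rotate_corners_def by (simp add: mod4_rotate_back)

lemma parallelogram_rotate_corners_1:
  assumes "parallelogram A"
  shows "parallelogram (rotate_corners 1 A) \<and> par_area (rotate_corners 1 A) = par_area A"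
proof -
  have r: "rotate_corners 1 A 0 = A 1" "rotate_corners 1 A 1 = A 2"
    "rotate_corners 1 A 2 = A 3" "rotate_corners 1 A 3 = A 0"
    unfolding rotate_corners_def one_add_one by simp_all
  have "A 2 - A 1 = A 3 - A 0"
    using assms by (simp add: parallelogram_def algebra_simps)
  then have "cross (A 2 - A 1) (A 0 - A 1) = cross (A 3 - A 0) (A 0 - A 1)"
    by (simp only:)
  also have "\<dots> = cross (A 1 - A 0) (A 3 - A 0)"
    by (simp add: cross_def algebra_simps)
  finally have "cross (A 2 - A 1) (A 0 - A 1) = cross (A 1 - A 0) (A 3 - A 0)" .
  with assms show ?thesis
    unfolding parallelogram_def par_area_def r by (simp add: add.commute)
qed

lemma parallelogram_rotate_corners:
  assumes "parallelogram A"
  shows "parallelogram (rotate_corners k A) \<and> par_area (rotate_corners k A) = par_area A"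
proof (induction k)
  case 0
  from assms show ?case
    by (simp add: rotate_corners_def parallelogram_def par_area_def)
next
  case (Suc k)
  then show ?case
    using parallelogram_rotate_corners_1[of "rotate_corners k A"]
    by (simp add: rotate_corners_rotate_corners)
qed

lemma locally_maximal_rotate_corners:
  assumes "locally_maximal v n A"
  shows "locally_maximal v n (rotate_corners k A)"
proof -
  obtain \<delta> where "\<delta> > 0" and A: "parallelogram A" "lies_in A (polygon v n)"
    and max: "\<And>B. parallelogram B \<Longrightarrow> lies_in B (polygon v n)
      \<Longrightarrow> \<forall>i<4. dist (A i) (B i) < \<delta> \<Longrightarrow> par_area B \<le> par_area A"
    using assms unfolding locally_maximal_def by blast
  have "par_area B \<le> par_area (rotate_corners k A)"
    if B: "parallelogram B" "lies_in B (polygon v n)"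
      "\<forall>i<4. dist (rotate_corners k A i) (B i) < \<delta>" for B
  proof -
    let ?B' = "rotate_corners (3 * k) B"
    have "dist (A i) (?B' i) < \<delta>" if "i < 4" for i
      using B(3)[rule_format, of "(i + 3 * k) mod 4"] rotate_corners_back[OF that, of k A]
      by (simp add: rotate_corners_def)
    moreover have "lies_in ?B' (polygon v n)"
      using B(2) by (simp add: lies_in_def rotate_corners_def)
    ultimately have "par_area ?B' \<le> par_area A"
      using max parallelogram_rotate_corners[OF B(1)] by blast
    then show ?thesis
      using parallelogram_rotate_corners[OF B(1)] parallelogram_rotate_corners[OF A(1)] by simp
  qed
  moreover have "lies_in (rotate_corners k A) (polygon v n)"
    using A(2) by (simp add: lies_in_def rotate_corners_def)
  ultimately show ?thesis
    using \<open>\<delta> > 0\<close> parallelogram_rotate_corners[OF A(1)]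
    unfolding locally_maximal_def by blast
qed

lemma slidable_rotate_corners:
  assumes "slidable v n (rotate_corners k A)"
  shows "slidable v n A"
proof -
  obtain i j m where ij: "i < 4" "j < 4" "i \<noteq> j" "m < n"
    "A ((i + k) mod 4) \<in> edge v n m" "A ((j + k) mod 4) \<in> edge v n m"
    using assms by (auto simp: slidable_def rotate_corners_def)
  have "(i + k) mod 4 \<noteq> (j + k) mod 4"
    using mod4_rotate_back[OF ij(1), of k "3 * k" k] mod4_rotate_back[OF ij(2), of k "3 * k" k] ij(3)
    by auto
  with ij show ?thesis
    unfolding slidable_def by (meson mod_less_divisor zero_less_numeral)
qed

lemma LMAP_rotate_corners: "LMAP v n A \<Longrightarrow> LMAP v n (rotate_corners k A)"
  using locally_maximal_rotate_corners slidable_rotate_corners by (auto simp: LMAP_def)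

section \<open>Corners of an LMAP\<close>

lemma exists_short_vector_left_of:
  assumes "u \<noteq> 0" "0 < r"
  shows "\<exists>\<rho>. norm \<rho> < r \<and> 0 < cross u \<rho>"
proof -
  define p where "p = (- snd u, fst u)"
  have "cross u p = (fst u)\<^sup>2 + (snd u)\<^sup>2"
    by (simp add: p_def cross_def power2_eq_square)
  with assms(1) have "0 < cross u p"
    by (cases u) (simp add: sum_power2_gt_zero_iff zero_prod_def)
  then have "p \<noteq> 0" by (auto simp: cross_def)
  define \<rho> where "\<rho> = (r / (2 * norm p)) *\<^sub>R p"
  have "norm \<rho> < r" "0 < cross u \<rho>"
    using assms(2) \<open>p \<noteq> 0\<close> \<open>0 < cross u p\<close> by (simp_all add: \<rho>_def cross_scaleR_right)
  then show ?thesis by blast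
qed

lemma locally_maximal_corner_0_has_unit:
  assumes cv: "convex_polygon_cw v n" and LM: "locally_maximal v n A"
  shows "\<exists>u. unit_of v n (A 0) u"
proof (rule ccontr)
  assume "\<nexists>u. unit_of v n (A 0) u"
  have pA: "parallelogram A" and A: "A 0 \<in> polygon v n" "A 1 \<in> polygon v n"
    "A 2 \<in> polygon v n" "A 3 \<in> polygon v n"
    using LM by (auto simp: locally_maximal_def lies_in_iff)
  obtain r where "r > 0" and ball: "ball (A 0) r \<subseteq> polygon v n"
    using no_unit_imp_interior[OF cv A(1) \<open>\<nexists>u. _\<close>] mem_interior by blast
  define u where "u = A 1 - A 0"
  have "u \<noteq> 0"
    using pA by (auto simp: parallelogram_def u_def cross_def)
  obtain \<rho> where "norm \<rho> < r" "0 < cross u \<rho>"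
    using exists_short_vector_left_of[OF \<open>u \<noteq> 0\<close> \<open>r > 0\<close>] by blast
  text \<open>The vector z points from corner 1 to a point near corner 0, so for small e > 0
    corner 1 translated by e z stays in the polygon by convexity and corner 0 translated by e z
    stays near corner 0.\<close>
  define z where "z = \<rho> - u"
  have "A 1 + z \<in> polygon v n"
    using ball \<open>norm \<rho> < r\<close> by (auto simp: z_def u_def dist_norm)
  define m where "m i = (if i \<le> 1 then z else 0)" for i :: nat
  show False
  proof (rule locally_maximal_no_enlarging_motion[OF LM, of m])
    have "\<forall>\<^sub>F e in at_right 0. dist (A 0 + e *\<^sub>R z) (A 0) < r"
      using \<open>r > 0\<close> by (intro tendstoD tendsto_eq_intros) auto
    moreover have "\<forall>\<^sub>F e in at_right (0::real). 0 < e \<and> e < 1"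
      by (intro eventually_conj eventually_at_right_less order_tendstoD(2)[OF tendsto_ident_at]) simp
    ultimately show "\<forall>\<^sub>F e in at_right 0. lies_in (\<lambda>i. A i + e *\<^sub>R m i) (polygon v n)"
    proof eventually_elim
      case (elim e)
      have "A 1 + e *\<^sub>R z = (1 - e) *\<^sub>R A 1 + e *\<^sub>R (A 1 + z)"
        by (simp add: algebra_simps)
      then have "A 1 + e *\<^sub>R z \<in> polygon v n"
        using elim A(2) \<open>A 1 + z \<in> polygon v n\<close> convex_polygon by (simp add: convex_def)
      moreover have "A 0 + e *\<^sub>R z \<in> polygon v n"
        using elim ball by (auto simp: dist_commute)
      ultimately show ?case
        using A by (simp add: lies_in_iff m_def)
    qed
    have "m 1 - m 0 = 0" "m 3 - m 0 = - z"
      by (simp_all add: m_def)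
    then have "cross (A 1 - A 0 + e *\<^sub>R (m 1 - m 0)) (A 3 - A 0 + e *\<^sub>R (m 3 - m 0))
        = cross u (A 3 - A 0) - e * cross u \<rho>" for e
      unfolding u_def[symmetric] by (simp add: z_def cross_add_right cross_diff_right cross_scaleR_right)
    then have "cross (A 1 - A 0 + e *\<^sub>R (m 1 - m 0)) (A 3 - A 0 + e *\<^sub>R (m 3 - m 0))
        < cross (A 1 - A 0) (A 3 - A 0)" if "0 < e" for e
      using that \<open>0 < cross u \<rho>\<close> by (simp add: u_def)
    with eventually_at_right_less show "\<forall>\<^sub>F e in at_right 0.
        cross (A 1 - A 0 + e *\<^sub>R (m 1 - m 0)) (A 3 - A 0 + e *\<^sub>R (m 3 - m 0))
        < cross (A 1 - A 0) (A 3 - A 0)"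
      by (rule eventually_mono)
  qed (simp add: m_def)
qed

lemma LMAP_corner_has_unit:
  assumes "convex_polygon_cw v n" "LMAP v n A"
  shows "\<exists>u. unit_of v n (A (i mod 4)) u"
  using locally_maximal_corner_0_has_unit[OF assms(1), of "rotate_corners i A"]
    LMAP_rotate_corners[OF assms(2)]
  by (simp add: LMAP_def rotate_corners_def)

lemma LMAP_corners_on_distinct_edges:
  assumes "LMAP v n A" "i < 4" "j < 4" "i \<noteq> j" "k < n" "A i \<in> edge v n k"
  shows "A j \<notin> edge v n k"
  using assms by (auto simp: LMAP_def slidable_def)

lemma positive_combination_if_cross_pos:
  assumes "0 < cross r q" "0 < cross p r" "0 < cross p q"
  shows "\<exists>\<alpha> \<beta>. 0 < \<alpha> \<and> 0 < \<beta> \<and> r = \<alpha> *\<^sub>R p + \<beta> *\<^sub>R q"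
proof -
  have "r = (1 / cross p q) *\<^sub>R (cross p q *\<^sub>R r)"
    using assms(3) by simp
  also have "\<dots> = (cross r q / cross p q) *\<^sub>R p + (cross p r / cross p q) *\<^sub>R q"
    unfolding scaleR_cross_decompose[of p q r] by (simp add: scaleR_add_right)
  finally show ?thesis
    using assms by (intro exI[of _ "cross r q / cross p q"] exI[of _ "cross p r / cross p q"]) simp
qed

lemma parallelogram_edge_dir_in_cone:
  assumes cv: "convex_polygon_cw v n" and np: "no_parallel_edges v n"
    and "parallelogram A" "lies_in A (polygon v n)"
    and k: "kr < n" "kp < n" "kq < n"
    and E: "A 0 \<in> edge v n kr" "A 1 \<in> edge v n kp" "A 3 \<in> edge v n kq"
    and "kr \<noteq> kp" "kr \<noteq> kq" "prec v n kq kp"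
  shows "\<exists>\<alpha> \<beta>. 0 < \<alpha> \<and> 0 < \<beta> \<and> edge_dir v n kr = \<alpha> *\<^sub>R edge_dir v n kp + \<beta> *\<^sub>R edge_dir v n kq"
proof -
  define r where "r = edge_dir v n kr"
  define p where "p = edge_dir v n kp"
  define q where "q = edge_dir v n kq"
  define u where "u = A 1 - A 0"
  define w where "w = A 3 - A 0"
  have A: "A 0 \<in> polygon v n" "A 1 \<in> polygon v n" "A 2 \<in> polygon v n" "A 3 \<in> polygon v n"
    using assms(4) by (simp_all add: lies_in_iff)
  have "cross u w < 0" and A2: "A 2 = A 1 + A 3 - A 0"
    using assms(3) by (simp_all add: parallelogram_def u_def w_def algebra_simps)
  have ru: "cross r u \<le> 0" and rw: "cross r w \<le> 0"
    using polygon_right_of_edge_point[OF cv k(1) E(1)] A by (simp_all add: r_def u_def w_def)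
  have "cross p (A 0 - A 1) \<le> 0" "cross p (A 2 - A 1) \<le> 0"
    using polygon_right_of_edge_point[OF cv k(2) E(2)] A by (simp_all add: p_def)
  then have pu: "0 \<le> cross p u" and pw: "cross p w \<le> 0"
    by (simp_all add: u_def w_def A2 cross_diff_right)
  have "cross q (A 0 - A 3) \<le> 0" "cross q (A 2 - A 3) \<le> 0"
    using polygon_right_of_edge_point[OF cv k(3) E(3)] A by (simp_all add: q_def)
  then have qw: "0 \<le> cross q w" and qu: "cross q u \<le> 0"
    by (simp_all add: u_def w_def A2 cross_diff_right)
  have "0 \<le> cross r q"
    using \<open>cross u w < 0\<close> mult_nonpos_nonneg[OF ru qw] mult_nonpos_nonpos[OF rw qu]
    by (rule cross_nonneg_if_products)
  moreover have "0 \<le> cross p r"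
    using \<open>cross u w < 0\<close> mult_nonneg_nonpos[OF pu rw] mult_nonpos_nonpos[OF pw ru]
    by (rule cross_nonneg_if_products)
  moreover have "cross r q \<noteq> 0" "cross p r \<noteq> 0"
    using np k \<open>kr \<noteq> kp\<close> \<open>kr \<noteq> kq\<close> by (auto simp: no_parallel_edges_def r_def p_def q_def)
  moreover have "0 < cross p q"
    using \<open>prec v n kq kp\<close> prec_iff_cross[OF cv np k(3,2)] cross_swap[of p q]
    by (auto simp: prec_def p_def q_def)
  ultimately show ?thesis
    using positive_combination_if_cross_pos[of r q p] by (simp add: r_def p_def q_def)
qed

lemma exists_enlarging_slide_direction:
  assumes "0 < \<alpha>" "0 < \<beta>" "cross q p < 0"
  obtains \<sigma> :: real
  where "\<And>e. 0 < e \<Longrightarrow> cross (u - (e * \<sigma> * \<beta>) *\<^sub>R q) (w - (e * \<sigma> * \<alpha>) *\<^sub>R p) < cross u w"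
proof
  define L where "L = \<alpha> * cross u p + \<beta> * cross q w"
  define \<sigma> :: real where "\<sigma> = (if 0 \<le> L then 1 else -1)"
  fix e :: real assume "0 < e"
  have "cross (u - (e * \<sigma> * \<beta>) *\<^sub>R q) (w - (e * \<sigma> * \<alpha>) *\<^sub>R p)
      = cross u w - (e * \<sigma>) * L + (e * \<sigma>)\<^sup>2 * (\<alpha> * \<beta> * cross q p)"
    by (simp add: L_def cross_def power2_eq_square algebra_simps)
  moreover have "0 \<le> (e * \<sigma>) * L"
    using \<open>0 < e\<close> by (simp add: \<sigma>_def mult_le_0_iff)
  moreover have "(e * \<sigma>)\<^sup>2 * (\<alpha> * \<beta> * cross q p) < 0"
    using \<open>0 < e\<close> assms by (intro mult_pos_neg) (simp_all add: \<sigma>_def mult_pos_neg)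
  ultimately show "cross (u - (e * \<sigma> * \<beta>) *\<^sub>R q) (w - (e * \<sigma> * \<alpha>) *\<^sub>R p) < cross u w"
    by linarith
qed

lemma LMAP_no_narrow_corner_0_on_edges:
  assumes cv: "convex_polygon_cw v n" and np: "no_parallel_edges v n" and L: "LMAP v n A"
    and k: "kr < n" "kp < n" "kq < n"
    and E: "A 0 \<in> edge v n kr" "A 1 \<in> edge v n kp" "A 3 \<in> edge v n kq"
    and "prec v n kq kp"
  shows False
proof -
  have LM: "locally_maximal v n A" using L by (simp add: LMAP_def)
  then have pA: "parallelogram A" and lA: "lies_in A (polygon v n)"
    by (simp_all add: locally_maximal_def)
  have "kr \<noteq> kp" "kr \<noteq> kq"
    using LMAP_corners_on_distinct_edges[OF L, of 0 _ kr] k(1) E by force+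
  define r where "r = edge_dir v n kr"
  define p where "p = edge_dir v n kp"
  define q where "q = edge_dir v n kq"
  obtain \<alpha> \<beta> where "0 < \<alpha>" "0 < \<beta>" and r: "r = \<alpha> *\<^sub>R p + \<beta> *\<^sub>R q"
    using parallelogram_edge_dir_in_cone[OF cv np pA lA k E \<open>kr \<noteq> kp\<close> \<open>kr \<noteq> kq\<close>
        \<open>prec v n kq kp\<close>]
    by (auto simp: r_def p_def q_def)
  have "cross q p < 0"
    using \<open>prec v n kq kp\<close> prec_iff_cross[OF cv np k(3,2)] by (auto simp: prec_def p_def q_def)
  obtain \<sigma> where enlarging: "\<And>e. 0 < e \<Longrightarrow> cross (A 1 - A 0 - (e * \<sigma> * \<beta>) *\<^sub>R q)
      (A 3 - A 0 - (e * \<sigma> * \<alpha>) *\<^sub>R p) < cross (A 1 - A 0) (A 3 - A 0)"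
    using exists_enlarging_slide_direction[OF \<open>0 < \<alpha>\<close> \<open>0 < \<beta>\<close> \<open>cross q p < 0\<close>] by blast
  define m where "m i = (if i = 0 then \<sigma> *\<^sub>R r else if i = 1 then (\<sigma> * \<alpha>) *\<^sub>R p
      else if i = 3 then (\<sigma> * \<beta>) *\<^sub>R q else 0)" for i :: nat
  show False
  proof (rule locally_maximal_no_enlarging_motion[OF LM, of m])
    show "m 0 + m 2 = m 1 + m 3"
      by (simp add: m_def r scaleR_add_right)
    have lim: "((\<lambda>e. e * c) \<longlongrightarrow> 0) (at_right 0)" for c :: real
      by (auto intro!: tendsto_eq_intros)
    have "\<forall>\<^sub>F e in at_right 0. A 0 + (e * \<sigma>) *\<^sub>R r \<in> edge v n kr
        \<and> A 1 + (e * (\<sigma> * \<alpha>)) *\<^sub>R p \<in> edge v n kp \<and> A 3 + (e * (\<sigma> * \<beta>)) *\<^sub>R q \<in> edge v n kq"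
      using eventually_edge_slide[OF E(1) lim] eventually_edge_slide[OF E(2) lim]
        eventually_edge_slide[OF E(3) lim]
      unfolding r_def p_def q_def by (simp add: eventually_conj_iff)
    then show "\<forall>\<^sub>F e in at_right 0. lies_in (\<lambda>i. A i + e *\<^sub>R m i) (polygon v n)"
      using edge_subset_polygon[OF k(1), of v] edge_subset_polygon[OF k(2), of v]
        edge_subset_polygon[OF k(3), of v] lA
      by (auto simp: lies_in_iff m_def elim!: eventually_mono)
    show "\<forall>\<^sub>F e in at_right 0. cross (A 1 - A 0 + e *\<^sub>R (m 1 - m 0)) (A 3 - A 0 + e *\<^sub>R (m 3 - m 0))
        < cross (A 1 - A 0) (A 3 - A 0)"
      using eventually_at_right_less
    proof eventually_elim
      case (elim e)
      have "A 1 - A 0 + e *\<^sub>R (m 1 - m 0) = A 1 - A 0 - (e * \<sigma> * \<beta>) *\<^sub>R q"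
        "A 3 - A 0 + e *\<^sub>R (m 3 - m 0) = A 3 - A 0 - (e * \<sigma> * \<alpha>) *\<^sub>R p"
        by (simp_all add: m_def r algebra_simps)
      with enlarging[OF elim] show ?case by (simp only:)
    qed
  qed
qed

lemma anchored_mod4 [simp]: "anchored v n A (i mod 4) \<longleftrightarrow> anchored v n A i"
  and narrow_mod4 [simp]: "narrow v n A (i mod 4) \<longleftrightarrow> narrow v n A i"
  and broad_mod4 [simp]: "broad v n A (i mod 4) \<longleftrightarrow> broad v n A i"
  by (simp_all add: anchored_def narrow_def broad_def mod_add_left_eq mod_Suc_eq)

lemma anchored_cong_mod4: "i mod 4 = j mod 4 \<Longrightarrow> anchored v n A i \<longleftrightarrow> anchored v n A j"
  by (metis anchored_mod4)

lemma narrow_cong_mod4: "i mod 4 = j mod 4 \<Longrightarrow> narrow v n A i \<longleftrightarrow> narrow v n A j"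
  by (metis narrow_mod4)

lemma broad_iff_narrow_opposite: "broad v n A i \<longleftrightarrow> narrow v n A (i + 2)"
proof -
  have "(i + 2 + 3) mod 4 = (i + 1) mod 4" "(i + 2 + 1) mod 4 = (i + 3) mod 4"
    by presburger+
  then show ?thesis
    unfolding broad_def narrow_def by metis
qed

lemma unit_of_unanchored_corner:
  assumes "unit_of v n (A (i mod 4)) u" "\<not> anchored v n A i"
  obtains k where "k < n" "u = Edge k" "A (i mod 4) \<in> edge v n k"
  using assms by (cases u) (auto simp: anchored_def)

lemma LMAP_unanchored_corner_on_edge:
  assumes "convex_polygon_cw v n" "LMAP v n A" "\<not> anchored v n A i"
  obtains k where "k < n" "A (i mod 4) \<in> edge v n k"
  using LMAP_corner_has_unit[OF assms(1,2)] unit_of_unanchored_corner assms(3) by metis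

lemma LMAP_no_narrow_corner_on_edges:
  assumes cv: "convex_polygon_cw v n" and np: "no_parallel_edges v n" and L: "LMAP v n A"
    and k: "kr < n" "kp < n" "kq < n"
    and E: "A (i mod 4) \<in> edge v n kr" "A ((i + 1) mod 4) \<in> edge v n kp"
      "A ((i + 3) mod 4) \<in> edge v n kq"
    and "prec v n kq kp"
  shows False
  using LMAP_no_narrow_corner_0_on_edges[OF cv np LMAP_rotate_corners[OF L] k _ _ _ \<open>prec v n kq kp\<close>] E
  by (simp add: rotate_corners_def add.commute)

lemma LMAP_narrow_corner_anchored_nearby:
  assumes cv: "convex_polygon_cw v n" and np: "no_parallel_edges v n" and L: "LMAP v n A"
    and "narrow v n A i"
  shows "anchored v n A i \<or> anchored v n A (i + 1) \<or> anchored v n A (i + 3)"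
proof (rule ccontr)
  assume "\<not> ?thesis"
  then have "\<not> anchored v n A i" "\<not> anchored v n A (i + 1)" "\<not> anchored v n A (i + 3)"
    by auto
  obtain u u' where u: "unit_of v n (A ((i + 3) mod 4)) u" "unit_of v n (A ((i + 1) mod 4)) u'"
    and "chasing v n u u'"
    using \<open>narrow v n A i\<close> by (auto simp: narrow_def)
  obtain kq where "kq < n" "u = Edge kq" "A ((i + 3) mod 4) \<in> edge v n kq"
    using unit_of_unanchored_corner[OF u(1) \<open>\<not> anchored v n A (i + 3)\<close>] .
  moreover obtain kp where "kp < n" "u' = Edge kp" "A ((i + 1) mod 4) \<in> edge v n kp"
    using unit_of_unanchored_corner[OF u(2) \<open>\<not> anchored v n A (i + 1)\<close>] .
  moreover obtain kr where "kr < n" "A (i mod 4) \<in> edge v n kr"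
    using LMAP_unanchored_corner_on_edge[OF cv L \<open>\<not> anchored v n A i\<close>] .
  ultimately show False
    using LMAP_no_narrow_corner_on_edges[OF cv np L] \<open>chasing v n u u'\<close> by auto
qed

lemma LMAP_opposite_unanchored_narrow:
  assumes cv: "convex_polygon_cw v n" and np: "no_parallel_edges v n" and L: "LMAP v n A"
    and "\<not> anchored v n A i" "\<not> anchored v n A (i + 2)"
  shows "narrow v n A (i + 1) \<or> narrow v n A (i + 3)"
proof -
  obtain kr where kr: "kr < n" "A (i mod 4) \<in> edge v n kr"
    using LMAP_unanchored_corner_on_edge[OF cv L \<open>\<not> anchored v n A i\<close>] .
  obtain ks where ks: "ks < n" "A ((i + 2) mod 4) \<in> edge v n ks"
    using LMAP_unanchored_corner_on_edge[OF cv L \<open>\<not> anchored v n A (i + 2)\<close>] .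
  have "i mod 4 \<noteq> (i + 2) mod 4" by presburger
  then have "kr \<noteq> ks"
    using LMAP_corners_on_distinct_edges[OF L _ _ _ kr(1,2)] ks(2) by auto
  have idx: "(i + 1 + 3) mod 4 = i mod 4" "(i + 1 + 1) mod 4 = (i + 2) mod 4"
    "(i + 3 + 3) mod 4 = (i + 2) mod 4" "(i + 3 + 1) mod 4 = i mod 4"
    by presburger+
  have "prec v n kr ks \<or> prec v n ks kr"
    using prec_total[OF cv np kr(1) ks(1) \<open>kr \<noteq> ks\<close>] .
  then show ?thesis
    using kr ks unfolding narrow_def idx by (metis chasing_Edge_Edge unit_of_Edge)
qed

lemma LMAP_not_even_imp_narrow_or_broad:
  assumes "convex_polygon_cw v n" "LMAP v n A" "\<not> even_corner v n A i"
  shows "narrow v n A i \<or> broad v n A i"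
proof -
  obtain u u' where "unit_of v n (A ((i + 3) mod 4)) u" "unit_of v n (A ((i + 1) mod 4)) u'"
    using LMAP_corner_has_unit[OF assms(1,2)] by metis
  with assms(3) show ?thesis
    unfolding even_corner_def narrow_def broad_def by blast
qed

lemma LMAP_narrow_corner_cases:
  assumes cv: "convex_polygon_cw v n" and np: "no_parallel_edges v n" and L: "LMAP v n A"
    and "narrow v n A j"
  shows "(\<exists>i. anchored v n A i \<and> narrow v n A i)
       \<or> (\<exists>i. anchored v n A i \<and> broad v n A i \<and> (anchored v n A (i + 1) \<or> anchored v n A (i + 3)))"
proof -
  note nearby = LMAP_narrow_corner_anchored_nearby[OF cv np L]
  have same: "anchored v n A (j + 4) = anchored v n A j"
    "anchored v n A (j + 2 + 3) = anchored v n A (j + 1)"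
    "anchored v n A (j + 6) = anchored v n A (j + 2)"
    by (rule anchored_cong_mod4, presburger)+
  consider "anchored v n A j" | "\<not> anchored v n A j" "anchored v n A (j + 2)"
    | "\<not> anchored v n A j" "\<not> anchored v n A (j + 2)"
    by blast
  then show ?thesis
  proof cases
    case 1
    with \<open>narrow v n A j\<close> show ?thesis by blast
  next
    case 2
    have "(j + 2 + 2) mod 4 = j mod 4" by presburger
    from narrow_cong_mod4[OF this] \<open>narrow v n A j\<close> have "broad v n A (j + 2)"
      by (simp only: broad_iff_narrow_opposite)
    moreover have "j + 2 + 1 = j + 3" by simp
    then have "anchored v n A (j + 2 + 1) \<or> anchored v n A (j + 2 + 3)"
      unfolding same(2) using nearby[OF \<open>narrow v n A j\<close>] 2 by metis
    ultimately show ?thesis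
      using 2 by blast
  next
    case 3
    then have "narrow v n A (j + 1) \<or> narrow v n A (j + 3)"
      by (rule LMAP_opposite_unanchored_narrow[OF cv np L])
    moreover have "j + 1 + 1 = j + 2" "j + 1 + 3 = j + 4" "j + 3 + 1 = j + 4" "j + 3 + 3 = j + 6"
      by simp_all
    ultimately have "anchored v n A (j + 1) \<and> narrow v n A (j + 1) \<or> anchored v n A (j + 3) \<and> narrow v n A (j + 3)"
      using nearby[of "j + 1"] nearby[of "j + 3"] 3 same by metis
    then show ?thesis by blast
  qed
qed

theorem lemma13:
  fixes v :: "nat \<Rightarrow> point" and n :: nat and A :: "nat \<Rightarrow> point"
  assumes "convex_polygon_cw v n"
    and "no_parallel_edges v n"
    and "LMAP v n A"
  shows "(\<exists>i<4. anchored v n A i \<and> narrow v n A i)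
       \<or> (\<exists>i<4. anchored v n A i \<and> broad v n A i
              \<and> (anchored v n A (i + 1) \<or> anchored v n A (i + 3)))
       \<or> (\<forall>i<4. even_corner v n A i)"
proof (cases "\<forall>i<4. even_corner v n A i")
  case False
  then obtain j where "narrow v n A j"
    using LMAP_not_even_imp_narrow_or_broad[OF assms(1,3)] broad_iff_narrow_opposite by blast
  from LMAP_narrow_corner_cases[OF assms \<open>narrow v n A j\<close>] show ?thesis
  proof (elim disjE exE)
    fix i assume "anchored v n A i \<and> narrow v n A i"
    then have "i mod 4 < 4 \<and> anchored v n A (i mod 4) \<and> narrow v n A (i mod 4)" by simp
    then show ?thesis by blast
  next
    fix i assume "anchored v n A i \<and> broad v n A i \<and> (anchored v n A (i + 1) \<or> anchored v n A (i + 3))"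
    moreover have "anchored v n A (i mod 4 + 1) = anchored v n A (i + 1)"
      "anchored v n A (i mod 4 + 3) = anchored v n A (i + 3)"
      by (rule anchored_cong_mod4, simp add: mod_add_left_eq mod_Suc_eq)+
    ultimately have "i mod 4 < 4 \<and> anchored v n A (i mod 4) \<and> broad v n A (i mod 4)
        \<and> (anchored v n A (i mod 4 + 1) \<or> anchored v n A (i mod 4 + 3))"
      by simp
    then show ?thesis by blast
  qed
qed simp

end
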